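(* Let $(X,\mathcal{X},\mu)$ be a probability space, $(Y,\mathcal{Y})$ a measurable space, $f\colon X\to Y$ a measurable function, and $\mu_f=\mu\circ\mathit{pre}_f\colon\mathcal{Y}\to[0,1]$ the output probability measure. Let $\mathit{pre}^\sharp_f\colon\wp(Y)\to\wp(X)$ satisfy $\mathit{pre}_f(A)\subseteq\mathit{pre}^\sharp_f(A)$ for all $A\subseteq Y$, and let $\uparrow\colon\wp(X)\to\mathcal{X}$ be an abstraction. Define $\mu^\sharp_f=\mu\circ\uparrow\circ\,\mathit{pre}^\sharp_f$, $\mathit{pre}'^\flat_f(A)=X\setminus\uparrow\big(\mathit{pre}^\sharp_f(Y\setminus A)\big)$, and $\mu^\flat_f=\mu\circ\mathit{pre}'^\flat_f$. Then for all $A\in\mathcal{Y}$, $\mu^\flat_f(A)\le\mu_f(A)$ and $\mu^\flat_f(A)=1-\mu^\sharp_f(Y\setminus A)$. Furthermore, if $\mathit{pre}^\sharp_f$ and $\uparrow$ are monotone, then $\mu^\flat_f$ is monotone.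
   Context: For $f\colon X\to Y$, $\mathit{pre}_f(B)=\{x\in X\mid f(x)\in B\}$; $f$ is measurable if $\mathit{pre}_f(B)\in\mathcal{X}$ for all $B\in\mathcal{Y}$. Functions are total (every $x\in X$ has an image $f(x)$). An abstraction is a function $\uparrow\colon\wp(X)\to\mathcal{X}$ with $S\subseteq\,\uparrow(S)$ for all $S\subseteq X$. A set function is monotone if $A\subseteq B$ implies $g(A)\subseteq g(B)$ (resp. $g(A)\le g(B)$). *)

theory Defs
  imports "HOL-Probability.Probability"
begin

definition pre :: "'a measure \<Rightarrow> ('a \<Rightarrow> 'b) \<Rightarrow> 'b set \<Rightarrow> 'a set" where
  "pre M f B = {x \<in> space M. f x \<in> B}"

definition abstraction :: "'a measure \<Rightarrow> ('a set \<Rightarrow> 'a set) \<Rightarrow> bool" where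
  "abstraction M up \<longleftrightarrow> (\<forall>S. S \<subseteq> space M \<longrightarrow> up S \<in> sets M \<and> S \<subseteq> up S)"

definition mu_f :: "'a measure \<Rightarrow> ('a \<Rightarrow> 'b) \<Rightarrow> 'b set \<Rightarrow> real" where
  "mu_f M f A = measure M (pre M f A)"

definition mu_sharp :: "'a measure \<Rightarrow> ('a set \<Rightarrow> 'a set) \<Rightarrow> ('b set \<Rightarrow> 'a set) \<Rightarrow> 'b set \<Rightarrow> real" where
  "mu_sharp M up preS A = measure M (up (preS A))"

definition pre_flat :: "'a measure \<Rightarrow> 'b measure \<Rightarrow> ('a set \<Rightarrow> 'a set) \<Rightarrow> ('b set \<Rightarrow> 'a set) \<Rightarrow> 'b set \<Rightarrow> 'a set" where
  "pre_flat M N up preS A = space M - up (preS (space N - A))"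

definition mu_flat :: "'a measure \<Rightarrow> 'b measure \<Rightarrow> ('a set \<Rightarrow> 'a set) \<Rightarrow> ('b set \<Rightarrow> 'a set) \<Rightarrow> 'b set \<Rightarrow> real" where
  "mu_flat M N up preS A = measure M (pre_flat M N up preS A)"

end

theory Submission
  imports Defs
begin

text \<open>Since \<open>pre\<^sub>f\<close> commutes with complements, complementing the over-approximation
  \<open>pre\<^sub>f(Y - A) \<subseteq> \<uparrow>(pre\<^sup>\<sharp>\<^sub>f(Y - A))\<close> yields the under-approximation
  \<open>pre'\<^sup>\<flat>\<^sub>f(A) \<subseteq> pre\<^sub>f(A)\<close> by a measurable set; measuring it gives the lower bound, and
  \<open>\<mu>(X - S) = 1 - \<mu>(S)\<close> gives the duality with \<open>\<mu>\<^sup>\<sharp>\<^sub>f\<close>. Monotonicity is inherited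
  because \<open>pre'\<^sup>\<flat>\<^sub>f\<close> composes two monotone maps with two complements.\<close>

lemma pre_eq_vimage_Int_space: "pre M f A = f -` A \<inter> space M"
  unfolding pre_def by auto

lemma pre_in_sets: "f \<in> M \<rightarrow>\<^sub>M N \<Longrightarrow> A \<in> sets N \<Longrightarrow> pre M f A \<in> sets M"
  by (simp add: pre_eq_vimage_Int_space measurable_sets)

lemma pre_Diff_space:
  assumes "f \<in> space M \<rightarrow> space N"
  shows "pre M f (space N - A) = space M - pre M f A"
  using assms unfolding pre_def by auto

lemma abstraction_in_sets: "abstraction M up \<Longrightarrow> S \<subseteq> space M \<Longrightarrow> up S \<in> sets M"
  unfolding abstraction_def by blast

lemma abstraction_superset: "abstraction M up \<Longrightarrow> S \<subseteq> space M \<Longrightarrow> S \<subseteq> up S"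
  unfolding abstraction_def by blast

lemma pre_flat_in_sets:
  assumes "abstraction M up" and "preS (space N - A) \<subseteq> space M"
  shows "pre_flat M N up preS A \<in> sets M"
  unfolding pre_flat_def using abstraction_in_sets[OF assms] by blast

lemma pre_flat_subset_pre:
  assumes f: "f \<in> space M \<rightarrow> space N"
    and up: "abstraction M up"
    and preS: "preS (space N - A) \<subseteq> space M"
    and over: "pre M f (space N - A) \<subseteq> preS (space N - A)"
  shows "pre_flat M N up preS A \<subseteq> pre M f A"
proof -
  have "pre M f (space N - A) \<subseteq> up (preS (space N - A))"
    using over abstraction_superset[OF up preS] by blast
  then have "space M - up (preS (space N - A)) \<subseteq> space M - pre M f (space N - A)"
    by blast
  also have "\<dots> = space M - (space M - pre M f A)"
    by (simp only: pre_Diff_space[OF f])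
  also have "\<dots> = pre M f A"
    unfolding pre_def by blast
  finally show ?thesis
    unfolding pre_flat_def .
qed

lemma pre_flat_mono:
  assumes preS_mono: "\<And>A B. A \<subseteq> B \<Longrightarrow> B \<subseteq> space N \<Longrightarrow> preS A \<subseteq> preS B"
    and up_mono: "\<And>S T. S \<subseteq> T \<Longrightarrow> T \<subseteq> space M \<Longrightarrow> up S \<subseteq> up T"
    and preS: "preS (space N - A) \<subseteq> space M"
    and "A \<subseteq> B"
  shows "pre_flat M N up preS A \<subseteq> pre_flat M N up preS B"
proof -
  have "preS (space N - B) \<subseteq> preS (space N - A)"
    using \<open>A \<subseteq> B\<close> by (intro preS_mono) auto
  then have "up (preS (space N - B)) \<subseteq> up (preS (space N - A))"
    using preS by (rule up_mono)
  then show ?thesis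
    unfolding pre_flat_def by blast
qed

context finite_measure
begin

lemma mu_flat_le_mu_f:
  assumes f: "f \<in> M \<rightarrow>\<^sub>M N" and "A \<in> sets N"
    and up: "abstraction M up"
    and preS: "preS (space N - A) \<subseteq> space M"
    and over: "pre M f (space N - A) \<subseteq> preS (space N - A)"
  shows "mu_flat M N up preS A \<le> mu_f M f A"
proof -
  have "f \<in> space M \<rightarrow> space N"
    using measurable_space[OF f] by (rule Pi_I)
  then have "pre_flat M N up preS A \<subseteq> pre M f A"
    using up preS over by (rule pre_flat_subset_pre)
  then show ?thesis
    unfolding mu_flat_def mu_f_def
    using pre_in_sets[OF f \<open>A \<in> sets N\<close>] by (rule finite_measure_mono)
qed

lemma mu_flat_mono:
  assumes up: "abstraction M up"
    and preS_space: "\<And>A. A \<subseteq> space N \<Longrightarrow> preS A \<subseteq> space M"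
    and preS_mono: "\<And>A B. A \<subseteq> B \<Longrightarrow> B \<subseteq> space N \<Longrightarrow> preS A \<subseteq> preS B"
    and up_mono: "\<And>S T. S \<subseteq> T \<Longrightarrow> T \<subseteq> space M \<Longrightarrow> up S \<subseteq> up T"
    and "A \<subseteq> B"
  shows "mu_flat M N up preS A \<le> mu_flat M N up preS B"
proof -
  have "pre_flat M N up preS A \<subseteq> pre_flat M N up preS B"
    using preS_mono up_mono preS_space[OF Diff_subset] \<open>A \<subseteq> B\<close> by (rule pre_flat_mono)
  moreover have "pre_flat M N up preS B \<in> sets M"
    using up preS_space[OF Diff_subset] by (rule pre_flat_in_sets)
  ultimately show ?thesis
    unfolding mu_flat_def by (rule finite_measure_mono)
qed

end

lemma (in prob_space) mu_flat_eq_one_minus_mu_sharp: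
  assumes "abstraction M up" and "preS (space N - A) \<subseteq> space M"
  shows "mu_flat M N up preS A = 1 - mu_sharp M up preS (space N - A)"
  unfolding mu_flat_def mu_sharp_def pre_flat_def
  using prob_compl[OF abstraction_in_sets[OF assms]] .

theorem theorem2:
  fixes M :: "'a measure" and N :: "'b measure" and f :: "'a \<Rightarrow> 'b"
    and preS :: "'b set \<Rightarrow> 'a set" and up :: "'a set \<Rightarrow> 'a set"
  assumes "prob_space M"
    and "f \<in> M \<rightarrow>\<^sub>M N"
    and "\<forall>A. A \<subseteq> space N \<longrightarrow> preS A \<subseteq> space M"
    and "\<forall>A. A \<subseteq> space N \<longrightarrow> pre M f A \<subseteq> preS A"
    and "abstraction M up"
  shows "(\<forall>A \<in> sets N. mu_flat M N up preS A \<le> mu_f M f A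
            \<and> mu_flat M N up preS A = 1 - mu_sharp M up preS (space N - A))
         \<and> ((\<forall>A B. A \<subseteq> B \<and> B \<subseteq> space N \<longrightarrow> preS A \<subseteq> preS B)
            \<and> (\<forall>S T. S \<subseteq> T \<and> T \<subseteq> space M \<longrightarrow> up S \<subseteq> up T)
            \<longrightarrow> (\<forall>A B. A \<subseteq> B \<and> B \<subseteq> space N \<longrightarrow> mu_flat M N up preS A \<le> mu_flat M N up preS B))"
proof -
  interpret prob_space M by fact
  have preS_space: "\<And>A. A \<subseteq> space N \<Longrightarrow> preS A \<subseteq> space M"
    using assms(3) by blast
  note preS = preS_space[OF Diff_subset]
  have over: "\<And>A. pre M f (space N - A) \<subseteq> preS (space N - A)"
    using assms(4) by blast
  show ?thesis
  proof (intro conjI ballI impI allI)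
    fix A assume "A \<in> sets N"
    show "mu_flat M N up preS A \<le> mu_f M f A"
      using assms(2) \<open>A \<in> sets N\<close> assms(5) preS over by (rule mu_flat_le_mu_f)
  next
    fix A
    show "mu_flat M N up preS A = 1 - mu_sharp M up preS (space N - A)"
      using assms(5) preS by (rule mu_flat_eq_one_minus_mu_sharp)
  next
    fix A B
    assume "(\<forall>A B. A \<subseteq> B \<and> B \<subseteq> space N \<longrightarrow> preS A \<subseteq> preS B)
      \<and> (\<forall>S T. S \<subseteq> T \<and> T \<subseteq> space M \<longrightarrow> up S \<subseteq> up T)"
    then have preS_mono: "\<And>A B. A \<subseteq> B \<Longrightarrow> B \<subseteq> space N \<Longrightarrow> preS A \<subseteq> preS B"
      and up_mono: "\<And>S T. S \<subseteq> T \<Longrightarrow> T \<subseteq> space M \<Longrightarrow> up S \<subseteq> up T"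
      by blast+
    assume "A \<subseteq> B \<and> B \<subseteq> space N"
    then have "A \<subseteq> B" ..
    with assms(5) preS_space preS_mono up_mono
    show "mu_flat M N up preS A \<le> mu_flat M N up preS B"
      by (rule mu_flat_mono)
  qed
qed

end
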